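(* Let $n\ge 1$, let $V_1,\dots,V_n>0$, $R_1,\dots,R_n>0$, $p\in(0,1)$ and $z>0$. Then the system of equations in unknowns $a_0,b_0$ $$\frac{1-p}{p}b_0=\sum_{i=1}^n\frac{1+\frac{b_0}{a_0R_i}}{V_i-\frac{1}{a_0}-\frac{1}{b_0}},\qquad \frac{1}{zp}b_0-a_0=\sum_{i=1}^n\frac{1+\frac{a_0R_i}{b_0}}{V_i-\frac{1}{a_0}-\frac{1}{b_0}}$$ has a positive solution with $a_0>0$ and $b_0>0$.
   Context: These are the Hamling equations for log odds ratios: $R_i$ are reported odds ratios with reported variances $V_i$ (of the log odds ratios), $p$ is the ratio of unexposed controls to total controls, $z$ is the ratio of total controls to total cases, and $a_0,b_0$ are the reference-group pseudo-cases and pseudo-non-cases. *)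

theory Defs
  imports "HOL-Analysis.Analysis"
begin

end

theory Submission
  imports Defs
begin

text \<open>Put \<open>x = 1/a\<^sub>0 + 1/b\<^sub>0\<close> and \<open>t = b\<^sub>0/a\<^sub>0\<close>, and let \<open>w\<^sub>i(x) = x/(V\<^sub>i - x)\<close>.
  After multiplying by \<open>x\<close> resp. \<open>x t\<close>, the first equation becomes
  \<open>\<Sum> w\<^sub>i + t \<Sum> w\<^sub>i/R\<^sub>i = c (1 + t)\<close> with \<open>c = (1-p)/p\<close>, and the second becomes a quadratic
  equation in \<open>t\<close> whose constant term is negative, so it has a unique positive root \<open>t(x)\<close>,
  depending continuously on \<open>x\<close> for \<open>0 \<le> x < min V\<^sub>i\<close>. The defect of the first equation
  along \<open>t = t(x)\<close> is \<open>-c (1 + t(0)) < 0\<close> at \<open>x = 0\<close>, and it becomes positive as \<open>x\<close>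
  approaches \<open>min V\<^sub>i\<close>, where one weight \<open>w\<^sub>i\<close> blows up. The intermediate value theorem
  gives a zero \<open>x\<close>, and \<open>a\<^sub>0 = (1+t)/(x t)\<close>, \<open>b\<^sub>0 = (1+t)/x\<close> solve the system.\<close>

definition upper_root :: "real \<Rightarrow> real \<Rightarrow> real \<Rightarrow> real" where
  "upper_root k b g = (- b + sqrt (b\<^sup>2 + 4 * k * g)) / (2 * k)"

lemma upper_root_eq:
  fixes k b g :: real
  assumes "k \<noteq> 0" "0 \<le> b\<^sup>2 + 4 * k * g"
  shows "k * (upper_root k b g)\<^sup>2 + b * upper_root k b g = g"
  using assms by (simp add: upper_root_def field_simps power2_eq_square)

lemma upper_root_pos:
  fixes k b g :: real
  assumes "k > 0" "g > 0"
  shows "upper_root k b g > 0"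
proof -
  have "sqrt (b\<^sup>2) < sqrt (b\<^sup>2 + 4 * k * g)"
    using assms by (intro real_sqrt_less_mono) simp
  then have "b < sqrt (b\<^sup>2 + 4 * k * g)"
    by (metis real_sqrt_abs abs_ge_self order.strict_trans1)
  then show ?thesis
    using assms by (simp add: upper_root_def)
qed

lemma hamling_back_substitution:
  fixes V R :: "'i \<Rightarrow> real" and x t c k :: real
  assumes "x > 0" "t > 0" "\<forall>i\<in>I. V i \<noteq> x"
    and first: "(\<Sum>i\<in>I. x / (V i - x)) + t * (\<Sum>i\<in>I. x / (V i - x) / R i) = c * (1 + t)"
    and second: "k * t\<^sup>2 + (k - 1 - (\<Sum>i\<in>I. x / (V i - x))) * t = 1 + (\<Sum>i\<in>I. x / (V i - x) * R i)"
  defines "a0 \<equiv> (1 + t) / (x * t)" and "b0 \<equiv> (1 + t) / x"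
  shows "\<forall>i\<in>I. V i - 1 / a0 - 1 / b0 \<noteq> 0"
    and "c * b0 = (\<Sum>i\<in>I. (1 + b0 / (a0 * R i)) / (V i - 1 / a0 - 1 / b0))"
    and "k * b0 - a0 = (\<Sum>i\<in>I. (1 + a0 * R i / b0) / (V i - 1 / a0 - 1 / b0))"
proof -
  have b0_pos: "b0 > 0"
    using assms(1,2) by (simp add: b0_def)
  have a0_eq: "a0 = b0 / t"
    by (simp add: a0_def b0_def)
  have "1 / a0 + 1 / b0 = (t + 1) / b0"
    by (simp add: a0_eq add_divide_distrib)
  also have "\<dots> = x"
    using assms(1,2) by (simp add: b0_def add.commute)
  finally have denom: "V i - 1 / a0 - 1 / b0 = V i - x" for i
    by simp
  have quotients: "b0 / a0 = t" "a0 / b0 = 1 / t"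
    using assms(2) b0_pos by (simp_all add: a0_eq)
  show "\<forall>i\<in>I. V i - 1 / a0 - 1 / b0 \<noteq> 0"
    using assms(3) by (simp add: denom)
  have "(\<Sum>i\<in>I. (1 + b0 / (a0 * R i)) / (V i - 1 / a0 - 1 / b0))
      = (\<Sum>i\<in>I. (x / (V i - x) + t * (x / (V i - x) / R i)) / x)"
  proof (rule sum.cong)
    fix i
    have "b0 / (a0 * R i) = t / R i"
      by (simp add: divide_divide_eq_left[symmetric] quotients)
    then have "(1 + b0 / (a0 * R i)) / (V i - 1 / a0 - 1 / b0) = (1 + t / R i) / (V i - x)"
      by (simp only: denom)
    also have "\<dots> = (x / (V i - x) + t * (x / (V i - x) / R i)) / x"
      using assms(1) by (simp add: add_divide_distrib)
    finally show "(1 + b0 / (a0 * R i)) / (V i - 1 / a0 - 1 / b0)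
        = (x / (V i - x) + t * (x / (V i - x) / R i)) / x" .
  qed simp
  also have "\<dots> = c * b0"
    using first by (simp add: b0_def sum_divide_distrib[symmetric] sum.distrib sum_distrib_left)
  finally show "c * b0 = (\<Sum>i\<in>I. (1 + b0 / (a0 * R i)) / (V i - 1 / a0 - 1 / b0))" ..
  have "(\<Sum>i\<in>I. (1 + a0 * R i / b0) / (V i - 1 / a0 - 1 / b0))
      = (\<Sum>i\<in>I. (t * (x / (V i - x)) + x / (V i - x) * R i) / (x * t))"
  proof (rule sum.cong)
    fix i
    have "a0 * R i / b0 = R i / t"
      using quotients(2) by (simp add: mult.commute times_divide_eq_left[symmetric])
    then have "(1 + a0 * R i / b0) / (V i - 1 / a0 - 1 / b0) = (1 + R i / t) / (V i - x)"
      by (simp only: denom)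
    also have "\<dots> = (t * (x / (V i - x)) + x / (V i - x) * R i) / (x * t)"
      using assms(1,2) by (simp add: add_divide_distrib)
    finally show "(1 + a0 * R i / b0) / (V i - 1 / a0 - 1 / b0)
        = (t * (x / (V i - x)) + x / (V i - x) * R i) / (x * t)" .
  qed simp
  also have "\<dots> = (t * (\<Sum>i\<in>I. x / (V i - x)) + (\<Sum>i\<in>I. x / (V i - x) * R i)) / (x * t)"
    by (simp add: sum_divide_distrib[symmetric] sum.distrib sum_distrib_left)
  also have "\<dots> = (k * t\<^sup>2 + (k - 1) * t - 1) / (x * t)"
    using second by (simp add: algebra_simps)
  also have "\<dots> = k * b0 - a0"
    using assms(1,2) by (simp add: a0_def b0_def field_simps power2_eq_square)
  finally show "k * b0 - a0 = (\<Sum>i\<in>I. (1 + a0 * R i / b0) / (V i - 1 / a0 - 1 / b0))" ..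
qed

locale hamling_setting =
  fixes I :: "'i set" and V R :: "'i \<Rightarrow> real" and c k :: real
  assumes finite_I: "finite I" and nonempty_I: "I \<noteq> {}"
    and V_pos: "\<And>i. i \<in> I \<Longrightarrow> V i > 0" and R_pos: "\<And>i. i \<in> I \<Longrightarrow> R i > 0"
    and c_pos: "c > 0" and k_pos: "k > 0"
begin

definition vmin :: real where
  "vmin = Min (V ` I)"

definition weight :: "'i \<Rightarrow> real \<Rightarrow> real" where
  "weight i s = s / (V i - s)"

definition ratio :: "real \<Rightarrow> real" where
  "ratio s = upper_root k (k - 1 - (\<Sum>i\<in>I. weight i s)) (1 + (\<Sum>i\<in>I. weight i s * R i))"

definition defect :: "real \<Rightarrow> real" where
  "defect s = (\<Sum>i\<in>I. weight i s) + ratio s * (\<Sum>i\<in>I. weight i s / R i) - c * (1 + ratio s)"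

lemma vmin_le: "i \<in> I \<Longrightarrow> vmin \<le> V i"
  using finite_I by (simp add: vmin_def)

lemma vmin_attained:
  obtains i0 where "i0 \<in> I" "V i0 = vmin"
proof -
  have "vmin \<in> V ` I"
    unfolding vmin_def using finite_I nonempty_I by (intro Min_in) auto
  then show thesis
    using that by auto
qed

lemma vmin_pos: "vmin > 0"
  using vmin_attained V_pos by metis

lemma weight_nonneg: "i \<in> I \<Longrightarrow> 0 \<le> s \<Longrightarrow> s < vmin \<Longrightarrow> 0 \<le> weight i s"
  using vmin_le[of i] by (simp add: weight_def)

lemma sum_weight_R_nonneg: "0 \<le> s \<Longrightarrow> s < vmin \<Longrightarrow> 0 \<le> (\<Sum>i\<in>I. weight i s * R i)"
  using weight_nonneg R_pos by (intro sum_nonneg) (simp add: less_imp_le)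

lemma ratio_pos:
  assumes "0 \<le> s" "s < vmin"
  shows "ratio s > 0"
  using sum_weight_R_nonneg[OF assms] k_pos unfolding ratio_def by (intro upper_root_pos) auto

lemma ratio_eq:
  assumes "0 \<le> s" "s < vmin"
  shows "k * (ratio s)\<^sup>2 + (k - 1 - (\<Sum>i\<in>I. weight i s)) * ratio s = 1 + (\<Sum>i\<in>I. weight i s * R i)"
  using sum_weight_R_nonneg[OF assms] k_pos unfolding ratio_def by (intro upper_root_eq) auto

lemma continuous_on_defect: "continuous_on {0..<vmin} defect"
proof -
  have "V i - s \<noteq> 0" if "i \<in> I" "s \<in> {0..<vmin}" for i s
    using vmin_le[OF that(1)] that(2) by auto
  then show ?thesis
    unfolding defect_def ratio_def upper_root_def weight_def
    using k_pos R_pos by (intro continuous_intros) (auto simp: less_imp_neq[symmetric])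
qed

lemma defect_0: "defect 0 < 0"
  using ratio_pos[of 0] vmin_pos c_pos by (simp add: defect_def weight_def)

text \<open>Near \<open>vmin\<close> a single weight already exceeds both \<open>c\<close> and \<open>c R\<^sub>i\<close>, which makes
  both brackets of \<open>defect s = (\<Sum> w\<^sub>i - c) + t (\<Sum> w\<^sub>i/R\<^sub>i - c)\<close> positive.\<close>

lemma defect_pos_near_vmin: "\<exists>s. 0 < s \<and> s < vmin \<and> defect s > 0"
proof -
  obtain i0 where i0: "i0 \<in> I" "V i0 = vmin"
    using vmin_attained .
  define K where "K = c * (1 + R i0) + 1"
  define s where "s = K * vmin / (1 + K)"
  have R_i0: "R i0 > 0" and K_pos: "K > 0"
    using R_pos[OF i0(1)] c_pos by (simp_all add: K_def add_pos_pos)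
  have s: "0 < s" "s < vmin"
    using K_pos vmin_pos by (simp_all add: s_def field_simps)
  have "vmin - s = vmin / (1 + K)"
    using K_pos by (simp add: s_def field_simps)
  then have weight_i0: "weight i0 s = K"
    using K_pos vmin_pos by (simp add: weight_def s_def i0(2))
  have terms_nonneg: "0 \<le> weight i s" "0 \<le> weight i s / R i" if "i \<in> I" for i
    using weight_nonneg[OF that] R_pos[OF that] s by simp_all
  have "K \<le> (\<Sum>i\<in>I. weight i s)"
    unfolding weight_i0[symmetric] by (rule member_le_sum) (use i0(1) finite_I terms_nonneg in auto)
  moreover have "K / R i0 \<le> (\<Sum>i\<in>I. weight i s / R i)"
    unfolding weight_i0[symmetric] by (rule member_le_sum) (use i0(1) finite_I terms_nonneg in auto)
  moreover have "c < K" "c < K / R i0"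
    using mult_pos_pos[OF c_pos R_i0] c_pos
    by (simp_all add: K_def pos_less_divide_eq[OF R_i0] algebra_simps)
  ultimately have "0 < (\<Sum>i\<in>I. weight i s) - c" "0 < (\<Sum>i\<in>I. weight i s / R i) - c"
    by linarith+
  moreover have "defect s = ((\<Sum>i\<in>I. weight i s) - c) + ratio s * ((\<Sum>i\<in>I. weight i s / R i) - c)"
    by (simp add: defect_def algebra_simps)
  ultimately have "defect s > 0"
    using ratio_pos[of s] s by (metis add_pos_pos mult_pos_pos less_imp_le)
  then show ?thesis
    using s by blast
qed

lemma defect_root_exists: "\<exists>x. 0 < x \<and> x < vmin \<and> defect x = 0"
proof -
  obtain s where s: "0 < s" "s < vmin" "defect s > 0"
    using defect_pos_near_vmin by blast
  have "continuous_on {0..s} defect"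
    using continuous_on_defect by (rule continuous_on_subset) (use s in auto)
  then obtain x where "0 \<le> x" "x \<le> s" "defect x = 0"
    using IVT'[of defect 0 0 s] defect_0 s by auto
  moreover have "x \<noteq> 0"
    using defect_0 \<open>defect x = 0\<close> by auto
  ultimately show ?thesis
    using s(2) by (intro exI[of _ x]) auto
qed

lemma hamling_system_solvable:
  "\<exists>a0 b0. a0 > 0 \<and> b0 > 0 \<and> (\<forall>i\<in>I. V i - 1 / a0 - 1 / b0 \<noteq> 0) \<and>
     c * b0 = (\<Sum>i\<in>I. (1 + b0 / (a0 * R i)) / (V i - 1 / a0 - 1 / b0)) \<and>
     k * b0 - a0 = (\<Sum>i\<in>I. (1 + a0 * R i / b0) / (V i - 1 / a0 - 1 / b0))"
proof -
  obtain x where x: "0 < x" "x < vmin" "defect x = 0"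
    using defect_root_exists by blast
  define t where "t = ratio x"
  have t: "t > 0"
    using ratio_pos x by (simp add: t_def)
  have "\<forall>i\<in>I. V i \<noteq> x"
    using vmin_le x(2) by fastforce
  from hamling_back_substitution[OF x(1) t this] x(3) ratio_eq[of x] x(1,2) t
  show ?thesis
    by (intro exI[of _ "(1 + t) / (x * t)"] exI[of _ "(1 + t) / x"])
      (simp add: defect_def weight_def t_def algebra_simps)
qed

end

theorem theorem4:
  fixes n :: nat and V R :: "nat \<Rightarrow> real" and p z :: real
  assumes "n \<ge> 1"
    and "\<forall>i\<in>{1..n}. V i > 0"
    and "\<forall>i\<in>{1..n}. R i > 0"
    and "0 < p" and "p < 1"
    and "z > 0"
  shows "\<exists>a0 b0 :: real. a0 > 0 \<and> b0 > 0 \<and>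
     (\<forall>i\<in>{1..n}. V i - 1 / a0 - 1 / b0 \<noteq> 0) \<and>
     (1 - p) / p * b0 = (\<Sum>i=1..n. (1 + b0 / (a0 * R i)) / (V i - 1 / a0 - 1 / b0)) \<and>
     1 / (z * p) * b0 - a0 = (\<Sum>i=1..n. (1 + a0 * R i / b0) / (V i - 1 / a0 - 1 / b0))"
proof -
  interpret hamling_setting "{1..n}" V R "(1 - p) / p" "1 / (z * p)"
    using assms by unfold_locales auto
  show ?thesis
    using hamling_system_solvable .
qed

end
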